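(* Let $S$ be a numerical semigroup with conductor $c$, let $m\ge 2c-1$ and let $r$ be a positive integer. Then among the optimal configurations of cardinality $r$ there is one which is an $(S,m,r)$-amenable set.
   Context: A numerical semigroup is a submonoid of $\mathbb N$ with finite complement; its conductor $c$ is the least element of $S$ such that $c+n\in S$ for all $n\in\mathbb N$. For $x\in S$, $\mathrm D(x)=\{\alpha\in S\mid x-\alpha\in S\}$, and for $M\subseteq S$, $\mathrm D(M)=\bigcup_{x\in M}\mathrm D(x)$. For $m\in S$, $\delta^r(m)=\min\{\sharp\mathrm D(\{m_1,\ldots,m_r\})\mid m\le m_1<\cdots<m_r,\ m_i\in S\}$. A configuration is a finite subset of $S\cap[m,\infty)$; a configuration $M$ of cardinality $r$ is optimal if $\sharp\mathrm D(M)=\delta^r(m)$. A set $M=\{m_1<\cdots<m_r\}\subseteq S$ with $2c-1\le m=m_1$ is $(S,m,r)$-amenable if $\mathrm D(m_i)\cap[m,\infty)\subseteq M$ for all $i\in\{1,\ldots,r\}$. *)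

theory Defs
  imports Main
begin

definition numerical_semigroup :: "nat set \<Rightarrow> bool" where
  "numerical_semigroup S \<longleftrightarrow> 0 \<in> S \<and> (\<forall>a\<in>S. \<forall>b\<in>S. a + b \<in> S) \<and> finite (UNIV - S)"

definition conductor :: "nat set \<Rightarrow> nat" where
  "conductor S = (LEAST c. c \<in> S \<and> (\<forall>n. c + n \<in> S))"

(* D(x) = {alpha in S | x - alpha in S}; subtraction in Z, so alpha \<le> x is required *)
definition Dset :: "nat set \<Rightarrow> nat \<Rightarrow> nat set" where
  "Dset S x = {a \<in> S. a \<le> x \<and> x - a \<in> S}"

definition DsetM :: "nat set \<Rightarrow> nat set \<Rightarrow> nat set" where
  "DsetM S M = (\<Union>x\<in>M. Dset S x)"

definition configs :: "nat set \<Rightarrow> nat \<Rightarrow> nat \<Rightarrow> nat set set" where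
  "configs S m r = {M. finite M \<and> M \<subseteq> S \<and> (\<forall>x\<in>M. m \<le> x) \<and> card M = r}"

definition delta :: "nat set \<Rightarrow> nat \<Rightarrow> nat \<Rightarrow> nat" where
  "delta S r m = (LEAST k. \<exists>M\<in>configs S m r. k = card (DsetM S M))"

definition optimal_config :: "nat set \<Rightarrow> nat \<Rightarrow> nat \<Rightarrow> nat set \<Rightarrow> bool" where
  "optimal_config S m r M \<longleftrightarrow> M \<in> configs S m r \<and> card (DsetM S M) = delta S r m"

definition amenable :: "nat set \<Rightarrow> nat \<Rightarrow> nat \<Rightarrow> nat set \<Rightarrow> bool" where
  "amenable S m r M \<longleftrightarrow> finite M \<and> M \<subseteq> S \<and> card M = r \<and> M \<noteq> {} \<and> Min M = m
     \<and> 2 * conductor S - 1 \<le> m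
     \<and> (\<forall>x\<in>M. Dset S x \<inter> {m..} \<subseteq> M)"

end

theory Submission
  imports Defs
begin

text \<open>Among the optimal configurations choose one, M, with least element sum. Two exchanges
  preserve optimality and lower the sum. Replacing x \<in> M by a missing a \<in> D(x) \<inter> [m,\<infinity>) does
  not enlarge D(M), because D(a) \<subseteq> D(x). Shifting M down so that it starts at m does not
  enlarge D(M) either: once m \<ge> 2c - 1, every divisor of a shifted element is either still a
  divisor of max M or, shifted back up, a divisor of the original element. Hence M is
  closed under these divisors and has minimum m, i.e. it is amenable.\<close>

lemma numerical_semigroup_add_closed:
  "numerical_semigroup S \<Longrightarrow> a \<in> S \<Longrightarrow> b \<in> S \<Longrightarrow> a + b \<in> S"
  unfolding numerical_semigroup_def by blast

lemma conductor_add_mem: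
  assumes "numerical_semigroup S"
  shows "conductor S + n \<in> S"
proof -
  let ?gaps = "UNIV - S"
  have "finite ?gaps" using assms unfolding numerical_semigroup_def by blast
  then obtain b where "\<forall>g\<in>?gaps. g < b"
    by (metis finite_nat_set_iff_bounded)
  hence "\<forall>k. b + k \<in> S" by fastforce
  hence "b \<in> S \<and> (\<forall>k. b + k \<in> S)" by (metis add_0_right)
  hence "conductor S \<in> S \<and> (\<forall>k. conductor S + k \<in> S)"
    unfolding conductor_def by (rule LeastI)
  thus ?thesis by blast
qed

lemma mem_if_conductor_le:
  assumes "numerical_semigroup S" "conductor S \<le> n"
  shows "n \<in> S"
  using conductor_add_mem[OF assms(1), of "n - conductor S"] assms(2) by simp

lemma finite_Dset: "finite (Dset S x)"
  by (rule finite_subset[of _ "{..x}"]) (auto simp: Dset_def)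

lemma finite_DsetM: "finite M \<Longrightarrow> finite (DsetM S M)"
  by (auto simp: DsetM_def finite_Dset)

lemma Dset_subset_if_mem:
  assumes "numerical_semigroup S" "a \<in> Dset S x"
  shows "Dset S a \<subseteq> Dset S x"
proof
  fix b assume "b \<in> Dset S a"
  hence "b \<in> S" "b \<le> a" "a - b \<in> S" by (auto simp: Dset_def)
  moreover have "a \<le> x" "x - a \<in> S" using assms(2) by (auto simp: Dset_def)
  moreover have "x - b \<in> S"
    using numerical_semigroup_add_closed[OF assms(1), of "a - b" "x - a"] calculation
    by (simp add: add.commute)
  ultimately show "b \<in> Dset S x" by (simp add: Dset_def)
qed

lemma card_DsetM_shift_le:
  assumes ns: "numerical_semigroup S" and "finite M" "M \<noteq> {}"
    and above: "\<forall>y\<in>M. m + t \<le> y" and mc: "2 * conductor S - 1 \<le> m"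
  shows "card (DsetM S ((\<lambda>y. y - t) ` M)) \<le> card (DsetM S M)"
proof -
  define c where "c = conductor S"
  have inS: "\<And>n. c \<le> n \<Longrightarrow> n \<in> S" using mem_if_conductor_le[OF ns] c_def by blast
  define top where "top = Max M"
  have top: "top \<in> M" "m + t \<le> top" using assms(2,3) above by (auto simp: top_def)
  define f where "f = (\<lambda>a. if a + c + t \<le> top then a else a + t)"
  have "f ` DsetM S ((\<lambda>y. y - t) ` M) \<subseteq> DsetM S M"
  proof
    fix b assume "b \<in> f ` DsetM S ((\<lambda>y. y - t) ` M)"
    then obtain a y where y: "y \<in> M" and a: "a \<in> Dset S (y - t)" and b: "b = f a"
      by (auto simp: DsetM_def)
    have "a \<in> S" "a \<le> y - t" "y - t - a \<in> S" using a by (auto simp: Dset_def)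
    show "b \<in> DsetM S M"
    proof (cases "a + c + t \<le> top")
      case True
      hence "a \<in> Dset S top" using \<open>a \<in> S\<close> inS by (auto simp: Dset_def)
      thus ?thesis using True top b by (auto simp: DsetM_def f_def)
    next
      case False
      hence "a + t \<in> S" using top mc c_def by (intro inS) linarith
      moreover have "m + t \<le> y" using above y by blast
      moreover have "y - (a + t) = y - t - a" by simp
      ultimately have "a + t \<in> Dset S y"
        using \<open>a \<le> y - t\<close> \<open>y - t - a \<in> S\<close> by (auto simp: Dset_def)
      thus ?thesis using False y b by (auto simp: DsetM_def f_def)
    qed
  qed
  moreover have "inj_on f (DsetM S ((\<lambda>y. y - t) ` M))"
    by (rule inj_onI) (auto simp: f_def split: if_splits)
  ultimately show ?thesis
    using finite_DsetM[OF assms(2)] by (intro card_inj_on_le)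
qed

lemma interval_in_configs:
  assumes "numerical_semigroup S" "conductor S \<le> m"
  shows "{m..<m + r} \<in> configs S m r"
  using mem_if_conductor_le[OF assms(1)] assms(2) by (auto simp: configs_def)

lemma delta_le_card: "M \<in> configs S m r \<Longrightarrow> delta S r m \<le> card (DsetM S M)"
  unfolding delta_def by (rule Least_le) blast

lemma optimal_config_exists:
  assumes "configs S m r \<noteq> {}"
  shows "\<exists>M. optimal_config S m r M"
proof -
  obtain M where "M \<in> configs S m r" using assms by blast
  hence "\<exists>M'\<in>configs S m r. card (DsetM S M) = card (DsetM S M')" by blast
  hence "\<exists>M\<in>configs S m r. delta S r m = card (DsetM S M)"
    unfolding delta_def by (rule LeastI[where P = "\<lambda>k. \<exists>M\<in>configs S m r. k = card (DsetM S M)"])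
  thus ?thesis by (auto simp: optimal_config_def)
qed

lemma optimal_config_if_card_DsetM_le:
  assumes "optimal_config S m r M" "M' \<in> configs S m r"
    and "card (DsetM S M') \<le> card (DsetM S M)"
  shows "optimal_config S m r M'"
  using assms delta_le_card[OF assms(2)] by (auto simp: optimal_config_def)

lemma optimal_config_exchange_divisor:
  assumes ns: "numerical_semigroup S" and opt: "optimal_config S m r M"
    and "x \<in> M" "a \<in> Dset S x" "m \<le> a" "a \<notin> M"
  shows "optimal_config S m r (insert a (M - {x}))"
proof (rule optimal_config_if_card_DsetM_le[OF opt])
  have "finite M" "M \<subseteq> S" "\<forall>y\<in>M. m \<le> y" "card M = r"
    using opt by (auto simp: optimal_config_def configs_def)
  moreover have "card (insert a (M - {x})) = card M"
    using \<open>finite M\<close> assms(3,6) by (metis DiffD1 card_Suc_Diff1 card_insert_disjoint finite_Diff)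
  ultimately show "insert a (M - {x}) \<in> configs S m r"
    using assms(3-6) by (auto simp: configs_def Dset_def)
  have "DsetM S (insert a (M - {x})) \<subseteq> DsetM S M"
    using Dset_subset_if_mem[OF ns assms(4)] assms(3) by (auto simp: DsetM_def)
  thus "card (DsetM S (insert a (M - {x}))) \<le> card (DsetM S M)"
    using finite_DsetM[OF \<open>finite M\<close>] by (rule card_mono[rotated])
qed

lemma optimal_config_shift:
  assumes ns: "numerical_semigroup S" and mc: "2 * conductor S - 1 \<le> m"
    and opt: "optimal_config S m r M" and "M \<noteq> {}"
    and above: "\<forall>y\<in>M. m + t \<le> y"
  shows "optimal_config S m r ((\<lambda>y. y - t) ` M)"
proof (rule optimal_config_if_card_DsetM_le[OF opt])
  have "finite M" "card M = r" using opt by (auto simp: optimal_config_def configs_def)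
  have "inj_on (\<lambda>y. y - t) M"
    using above by (intro inj_onI) (metis add_diff_cancel_right' le_add_diff_inverse2 le_add2 le_trans)
  moreover have "conductor S \<le> m" using mc by linarith
  ultimately show "(\<lambda>y. y - t) ` M \<in> configs S m r"
    using \<open>finite M\<close> \<open>card M = r\<close> above mem_if_conductor_le[OF ns]
    by (auto simp: configs_def card_image)
  show "card (DsetM S ((\<lambda>y. y - t) ` M)) \<le> card (DsetM S M)"
    using card_DsetM_shift_le[OF ns \<open>finite M\<close> assms(4) above mc] .
qed

theorem proposition3p7:
  fixes S :: "nat set" and m r :: nat
  assumes "numerical_semigroup S"
    and "2 * conductor S - 1 \<le> m"
    and "0 < r"
  shows "\<exists>M. optimal_config S m r M \<and> amenable S m r M"
proof -
  have "conductor S \<le> m" using assms(2) by linarith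
  then obtain M0 where "optimal_config S m r M0"
    using optimal_config_exists interval_in_configs[OF assms(1)] by blast
  then obtain M where opt: "optimal_config S m r M"
    and least: "\<And>M'. optimal_config S m r M' \<Longrightarrow> \<Sum>M \<le> \<Sum>M'"
    using ex_has_least_nat[of "optimal_config S m r" M0 Sum] by blast
  have M: "finite M" "M \<subseteq> S" "\<forall>x\<in>M. m \<le> x" "card M = r" "M \<noteq> {}"
    using opt assms(3) by (auto simp: optimal_config_def configs_def)
  have closed: "Dset S x \<inter> {m..} \<subseteq> M" if "x \<in> M" for x
  proof
    fix a assume a: "a \<in> Dset S x \<inter> {m..}"
    show "a \<in> M"
    proof (rule ccontr)
      assume "a \<notin> M"
      hence "\<Sum>M \<le> a + \<Sum>(M - {x})"
        using least[OF optimal_config_exchange_divisor[OF assms(1) opt that]] a M(1) by simp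
      moreover have "a < x" using a that \<open>a \<notin> M\<close> by (auto simp: Dset_def le_less)
      ultimately show False using M(1) that by (simp add: sum.remove)
    qed
  qed
  have "Min M = m"
  proof (rule ccontr)
    assume "Min M \<noteq> m"
    moreover have "m \<le> Min M" using M by simp
    ultimately obtain t where "0 < t" and above: "\<forall>y\<in>M. m + t \<le> y"
      using M(1) by (intro that[of "Min M - m"]) auto
    have "\<Sum>((\<lambda>y. y - t) ` M) \<le> (\<Sum>y\<in>M. y - t)"
      using sum_image_le[of M id "\<lambda>y. y - t"] M(1) by simp
    also have "\<dots> < \<Sum>M"
      using \<open>0 < t\<close> above M(1,5) by (intro sum_strict_mono) fastforce+
    finally show False
      using least[OF optimal_config_shift[OF assms(1,2) opt M(5) above]] by simp
  qed
  hence "amenable S m r M" using M closed assms(2) by (simp add: amenable_def)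
  thus ?thesis using opt by blast
qed

end
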